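(* Let $2<p<\frac{10}{3}$, $\lambda_3<0$, and assume $\Lambda>0$. For every $a>0$, the function $r\mapsto g(a,r)$ on $(0,+\infty)$, where $$g(a,r):=\frac12-\frac{\Lambda}{2}C_4^4\,r\,a-\frac{2|\lambda_3|}{p}C_p^p\,a^{p(1-\gamma_p)}r^{p\gamma_p-2},$$ has a unique global maximum point. Moreover, $\max_{r>0}g(a,r)>0$ if $a<\bar a$, $=0$ if $a=\bar a$, and $<0$ if $a>\bar a$, where $\bar a:=\left(\frac{1}{2\alpha}\right)^{3/4}$ and $$\alpha:=\frac12(\Lambda C_4^4)^{\frac{p\gamma_p-2}{p\gamma_p-3}}\left(\frac{4|\lambda_3|(2-p\gamma_p)C_p^p}{p}\right)^{\frac{1}{3-p\gamma_p}}+2\left(\frac{C_p^p|\lambda_3|}{p}\right)^{\frac{1}{3-p\gamma_p}}\left(\frac{4(2-p\gamma_p)}{\Lambda C_4^4}\right)^{\frac{p\gamma_p-2}{3-p\gamma_p}}.$$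
   Context: $\Lambda:=\max\{|\lambda_1-\frac{4\pi}{3}\lambda_2|,|\lambda_1+\frac{8\pi}{3}\lambda_2|\}$ for given real parameters $\lambda_1,\lambda_2$. For $q\in(2,6)$, $\gamma_q:=\frac{3(q-2)}{2q}$ and $C_q>0$ is a constant in the Gagliardo–Nirenberg inequality $\|u\|_q\le C_q\|\nabla u\|_2^{\gamma_q}\|u\|_2^{1-\gamma_q}$ for all $u\in H^1(\mathbb{R}^3)$. *)

theory Defs
  imports "HOL-Analysis.Analysis"
begin

definition Lam :: "real \<Rightarrow> real \<Rightarrow> real" where
  "Lam l1 l2 = max \<bar>l1 - 4 * pi / 3 * l2\<bar> \<bar>l1 + 8 * pi / 3 * l2\<bar>"

definition gam :: "real \<Rightarrow> real" where
  "gam q = 3 * (q - 2) / (2 * q)"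

definition gfun :: "real \<Rightarrow> real \<Rightarrow> real \<Rightarrow> real \<Rightarrow> real \<Rightarrow> real \<Rightarrow> real \<Rightarrow> real" where
  "gfun L C4 Cp l3 p a r =
     1/2 - L / 2 * C4 ^ 4 * r * a
     - 2 * \<bar>l3\<bar> / p * (Cp powr p) * a powr (p * (1 - gam p)) * r powr (p * gam p - 2)"

definition alpha :: "real \<Rightarrow> real \<Rightarrow> real \<Rightarrow> real \<Rightarrow> real \<Rightarrow> real" where
  "alpha L C4 Cp l3 p =
     1/2 * (L * C4 ^ 4) powr ((p * gam p - 2) / (p * gam p - 3))
       * (4 * \<bar>l3\<bar> * (2 - p * gam p) * Cp powr p / p) powr (1 / (3 - p * gam p))
     + 2 * (Cp powr p * \<bar>l3\<bar> / p) powr (1 / (3 - p * gam p))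
       * (4 * (2 - p * gam p) / (L * C4 ^ 4)) powr ((p * gam p - 2) / (3 - p * gam p))"

definition abar :: "real \<Rightarrow> real \<Rightarrow> real \<Rightarrow> real \<Rightarrow> real \<Rightarrow> real" where
  "abar L C4 Cp l3 p = (1 / (2 * alpha L C4 Cp l3 p)) powr (3/4)"

end

theory Submission
  imports Defs
begin

(* With m = (10 - 3p)/2 > 0 one has g(a,r) = 1/2 - (A a r + B a^((6-p)/2) r^(-m)) for
   positive constants A, B.  By strict convexity of x^(-m), the map r |-> A r + B r^(-m) on
   (0,oo) has the unique minimiser r0 = (m B / A)^(1/(m+1)), where both terms balance, and
   minimum (1 + 1/m) A^(m/(m+1)) (m B)^(1/(m+1)).  Inserting the a-dependence this minimum is
   homogeneous of degree (m + (6-p)/2)/(m+1) = 4/3 in a, and its coefficient is exactly alpha.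
   Hence max_r g(a,r) = 1/2 - alpha a^(4/3), which has the sign of abar - a. *)

lemma ln_less_minus_one:
  fixes x :: real
  assumes "0 < x" "x \<noteq> 1"
  shows "ln x < x - 1"
proof -
  have "ln x = 2 * ln (sqrt x)"
    using assms by (simp add: ln_sqrt)
  also have "\<dots> \<le> 2 * (sqrt x - 1)"
    using assms ln_le_minus_one[of "sqrt x"] by simp
  also have "\<dots> < x - 1"
  proof -
    have "0 < (sqrt x - 1)\<^sup>2"
      using assms by simp
    then show ?thesis
      using assms by (simp add: power2_eq_square algebra_simps)
  qed
  finally show ?thesis .
qed

lemma powr_neg_gt_tangent:
  fixes m x :: real
  assumes "0 < m" "0 < x" "x \<noteq> 1"
  shows "1 - m * (x - 1) < x powr (-m)"
proof -
  have "1 - m * (x - 1) < 1 + (-m * ln x)"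
    using assms ln_less_minus_one[of x] by simp
  also have "\<dots> \<le> exp (-m * ln x)"
    by (rule exp_ge_add_one_self)
  also have "\<dots> = x powr (-m)"
    using assms by (simp add: powr_def)
  finally show ?thesis .
qed

(* The minimum over r > 0 of A r + B r^(-m), for A, B, m > 0. *)
definition min_lin_neg_powr :: "real \<Rightarrow> real \<Rightarrow> real \<Rightarrow> real" where
  "min_lin_neg_powr m A B = (1 + 1/m) * A powr (m / (m + 1)) * (m * B) powr (1 / (m + 1))"

lemma min_lin_neg_powr_pos:
  "0 < m \<Longrightarrow> 0 < A \<Longrightarrow> 0 < B \<Longrightarrow> 0 < min_lin_neg_powr m A B"
  unfolding min_lin_neg_powr_def by (simp add: add_pos_pos)

lemma lin_plus_neg_powr_strict_min:
  fixes A B m :: real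
  assumes A: "0 < A" and B: "0 < B" and m: "0 < m"
  shows "\<exists>r0>0. A * r0 + B * r0 powr (-m) = min_lin_neg_powr m A B
    \<and> (\<forall>r>0. r \<noteq> r0 \<longrightarrow> min_lin_neg_powr m A B < A * r + B * r powr (-m))"
proof -
  define r0 where "r0 = (m * B / A) powr (1 / (m + 1))"
  have r0: "0 < r0"
    unfolding r0_def using A B m by simp
  have "r0 * r0 powr m = m * B / A"
    using r0 A B m
    by (simp add: r0_def powr_powr powr_add[symmetric] add_divide_distrib[symmetric] add.commute)
  then have balance: "B * r0 powr (-m) = A * r0 / m"
    using r0 A m by (simp add: powr_minus field_simps)
  have attained: "A * r0 * (1 + 1/m) = min_lin_neg_powr m A B"
  proof -
    have "A * r0 = A powr (1 - 1 / (m + 1)) * (m * B) powr (1 / (m + 1))"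
      using A B m by (simp add: r0_def powr_divide powr_diff)
    also have "1 - 1 / (m + 1) = m / (m + 1)"
      using m by (simp add: field_simps)
    finally show ?thesis
      unfolding min_lin_neg_powr_def by simp
  qed
  have "min_lin_neg_powr m A B < A * r + B * r powr (-m)" if "0 < r" "r \<noteq> r0" for r
  proof -
    define x where "x = r / r0"
    have x: "0 < x" "x \<noteq> 1" and r: "r = r0 * x"
      using r0 that by (auto simp: x_def)
    have "min_lin_neg_powr m A B = A * r + A * r0 / m * (1 - m * (x - 1))"
      using m r by (simp add: attained[symmetric] field_simps)
    also have "\<dots> < A * r + A * r0 / m * x powr (-m)"
      using powr_neg_gt_tangent[OF m x] A r0 m by (intro add_strict_left_mono mult_strict_left_mono) auto
    also have "A * r0 / m * x powr (-m) = B * r powr (-m)"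
      using r0 x by (simp add: r balance[symmetric] powr_mult)
    finally show ?thesis .
  qed
  then show ?thesis
    using r0 balance attained by (intro exI[of _ r0]) (auto simp: algebra_simps)
qed

lemma const_minus_lin_neg_powr_max:
  fixes A B m c :: real
  assumes "0 < A" "0 < B" "0 < m"
  defines "f \<equiv> \<lambda>r. c - (A * r + B * r powr (-m))"
  shows "(\<exists>!r. r > 0 \<and> (\<forall>s>0. f s \<le> f r))"
    and "(SUP r\<in>{0<..}. f r) = c - min_lin_neg_powr m A B"
proof -
  obtain r0 where r0: "0 < r0" "f r0 = c - min_lin_neg_powr m A B"
    and less: "\<And>r. 0 < r \<Longrightarrow> r \<noteq> r0 \<Longrightarrow> f r < f r0"
    using lin_plus_neg_powr_strict_min[OF assms(1-3)] unfolding f_def by force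
  then have le: "\<And>r. 0 < r \<Longrightarrow> f r \<le> f r0"
    by (metis order_le_less)
  show "\<exists>!r. r > 0 \<and> (\<forall>s>0. f s \<le> f r)"
  proof (rule ex1I[of _ r0])
    show "r0 > 0 \<and> (\<forall>s>0. f s \<le> f r0)"
      using r0(1) le by blast
  next
    show "r = r0" if "r > 0 \<and> (\<forall>s>0. f s \<le> f r)" for r
      using that r0(1) less by (meson not_le)
  qed
  show "(SUP r\<in>{0<..}. f r) = c - min_lin_neg_powr m A B"
    using r0 le by (intro cSup_eq_maximum) (auto simp: image_iff intro!: bexI[of _ r0])
qed

lemma min_lin_neg_powr_scale:
  fixes A B m a e :: real
  assumes "0 < A" "0 < B" "0 < m" "0 < a"
  shows "min_lin_neg_powr m (A * a) (B * a powr e) = min_lin_neg_powr m A B * a powr ((m + e) / (m + 1))"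
proof -
  have "(A * a) powr (m / (m + 1)) * (m * (B * a powr e)) powr (1 / (m + 1))
      = A powr (m / (m + 1)) * (m * B) powr (1 / (m + 1)) * (a powr (m / (m + 1)) * a powr (e / (m + 1)))"
    using assms by (simp add: powr_mult powr_powr)
  also have "a powr (m / (m + 1)) * a powr (e / (m + 1)) = a powr ((m + e) / (m + 1))"
    by (simp add: powr_add[symmetric] add_divide_distrib)
  finally show ?thesis
    unfolding min_lin_neg_powr_def by simp
qed

lemma min_lin_neg_powr_half_double:
  fixes M D m :: real
  assumes M: "0 < M" and D: "0 < D" and m: "0 < m"
  shows "min_lin_neg_powr m (M / 2) (2 * D)
    = 1/2 * M powr (m / (m + 1)) * (4 * m * D) powr (1 / (m + 1))
      + 2 * D powr (1 / (m + 1)) * (4 * m / M) powr (- m / (m + 1))"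
proof -
  define u where "u = 1 / (m + 1)"
  have u: "m / (m + 1) = 1 - u" "- m / (m + 1) = u - 1"
    using m by (simp_all add: u_def field_simps)
  define K where "K = (M / 2) powr (1 - u) * (m * (2 * D)) powr u"
  have K: "0 < K"
    unfolding K_def using assms by simp
  have ln4: "ln (4::real) = 2 * ln 2"
    using ln_realpow[of 2 2] by simp
  have "ln (1/2 * M powr (1 - u) * (4 * m * D) powr u) = ln K"
    using assms unfolding K_def by (simp add: ln_mult ln_div ln_powr ln4 algebra_simps)
  then have first: "1/2 * M powr (1 - u) * (4 * m * D) powr u = K"
    using assms K by (simp add: ln_inj_iff)
  have "ln (2 * D powr u * (4 * m / M) powr (u - 1)) = ln (K / m)"
    using assms unfolding K_def by (simp add: ln_mult ln_div ln_powr ln4 algebra_simps)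
  then have second: "2 * D powr u * (4 * m / M) powr (u - 1) = K / m"
    using assms K by (simp add: ln_inj_iff)
  show ?thesis
    unfolding min_lin_neg_powr_def u u_def[symmetric] first second
    by (simp add: K_def algebra_simps)
qed

lemma sgn_half_minus_powr:
  fixes c q a :: real
  assumes "0 < c" "0 < q" "0 < a"
  shows "sgn (1/2 - c * a powr q) = sgn ((1 / (2 * c)) powr (1 / q) - a)"
proof -
  define b where "b = (1 / (2 * c)) powr (1 / q)"
  have b: "0 < b" "b powr q = 1 / (2 * c)"
    using assms by (simp_all add: b_def powr_powr)
  have "1/2 - c * a powr q = c * (b powr q - a powr q)"
    using assms b by (simp add: field_simps)
  moreover have "sgn (b powr q - a powr q) = sgn (b - a)"
    using assms b powr_less_mono2[of q a b] powr_less_mono2[of q b a]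
    by (cases a b rule: linorder_cases) auto
  ultimately show ?thesis
    using assms by (simp add: sgn_mult b_def)
qed

lemma gfun_eq_const_minus_lin_neg_powr:
  assumes "p \<noteq> 0"
  shows "gfun L C4 Cp l3 p a = (\<lambda>r. 1/2 - ((L * C4^4 / 2) * a * r
    + (2 * (Cp powr p * \<bar>l3\<bar> / p)) * a powr ((6 - p) / 2) * r powr (- ((10 - 3 * p) / 2))))"
proof -
  have exps: "p * (1 - gam p) = (6 - p) / 2" "p * gam p - 2 = - ((10 - 3 * p) / 2)"
    using assms by (simp_all add: gam_def field_simps)
  show ?thesis
    unfolding gfun_def exps by (simp add: algebra_simps)
qed

lemma alpha_eq_min_lin_neg_powr:
  assumes "0 < p" "p < 10/3" "0 < L" "0 < C4" "0 < Cp" "l3 \<noteq> 0"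
  shows "alpha L C4 Cp l3 p
    = min_lin_neg_powr ((10 - 3 * p) / 2) (L * C4^4 / 2) (2 * (Cp powr p * \<bar>l3\<bar> / p))"
proof -
  define m where "m = (10 - 3 * p) / 2"
  have m: "0 < m"
    using assms by (simp add: m_def)
  have pgam: "p * gam p = 2 - m"
    using assms by (simp add: m_def gam_def field_simps)
  have exps: "(p * gam p - 2) / (p * gam p - 3) = m / (m + 1)"
    "1 / (3 - p * gam p) = 1 / (m + 1)" "(p * gam p - 2) / (3 - p * gam p) = - m / (m + 1)"
    unfolding pgam using m by (simp_all add: field_simps)
  have bases: "4 * \<bar>l3\<bar> * (2 - p * gam p) * Cp powr p / p = 4 * m * (Cp powr p * \<bar>l3\<bar> / p)"
    "4 * (2 - p * gam p) / (L * C4 ^ 4) = 4 * m / (L * C4 ^ 4)"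
    unfolding pgam by simp_all
  show ?thesis
    unfolding alpha_def exps bases m_def[symmetric]
    using min_lin_neg_powr_half_double[OF _ _ m, of "L * C4^4" "Cp powr p * \<bar>l3\<bar> / p"] assms
    by simp
qed

theorem lemma2p4:
  fixes l1 l2 l3 p C4 Cp a :: real
  assumes "2 < p" and "p < 10/3" and "l3 < 0"
    and "Lam l1 l2 > 0"
    and "C4 > 0" and "Cp > 0"
    and "a > 0"
  shows "(\<exists>!r. r > 0 \<and> (\<forall>s>0. gfun (Lam l1 l2) C4 Cp l3 p a s \<le> gfun (Lam l1 l2) C4 Cp l3 p a r))
    \<and> (a < abar (Lam l1 l2) C4 Cp l3 p \<longrightarrow> (SUP r\<in>{0<..}. gfun (Lam l1 l2) C4 Cp l3 p a r) > 0)
    \<and> (a = abar (Lam l1 l2) C4 Cp l3 p \<longrightarrow> (SUP r\<in>{0<..}. gfun (Lam l1 l2) C4 Cp l3 p a r) = 0)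
    \<and> (a > abar (Lam l1 l2) C4 Cp l3 p \<longrightarrow> (SUP r\<in>{0<..}. gfun (Lam l1 l2) C4 Cp l3 p a r) < 0)"
proof -
  define L where "L = Lam l1 l2"
  define m where "m = (10 - 3 * p) / 2"
  define A where "A = L * C4^4 / 2"
  define B where "B = 2 * (Cp powr p * \<bar>l3\<bar> / p)"
  have pos: "0 < m" "0 < A" "0 < B"
    using assms by (simp_all add: L_def m_def A_def B_def mult_neg_pos divide_neg_pos)
  have alpha: "alpha L C4 Cp l3 p = min_lin_neg_powr m A B"
    using assms alpha_eq_min_lin_neg_powr[of p L C4 Cp l3] by (simp add: L_def m_def A_def B_def)
  have alpha_pos: "0 < alpha L C4 Cp l3 p"
    unfolding alpha using pos by (rule min_lin_neg_powr_pos)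
  have scaled_pos: "0 < A * a" "0 < B * a powr ((6 - p) / 2)"
    using pos assms by simp_all
  note max = const_minus_lin_neg_powr_max[OF scaled_pos pos(1), of "1/2"]
  have g: "gfun L C4 Cp l3 p a = (\<lambda>r. 1/2 - (A * a * r + B * a powr ((6 - p) / 2) * r powr (-m)))"
    using assms by (simp add: gfun_eq_const_minus_lin_neg_powr A_def B_def m_def)
  have "min_lin_neg_powr m (A * a) (B * a powr ((6 - p) / 2)) = alpha L C4 Cp l3 p * a powr (4/3)"
  proof -
    have exponent: "(m + (6 - p) / 2) / (m + 1) = 4/3"
      using assms by (simp add: m_def field_simps)
    show ?thesis
      using min_lin_neg_powr_scale[OF pos(2,3,1) assms(7), of "(6 - p) / 2", unfolded exponent]
      by (simp add: alpha)
  qed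
  then have "sgn (SUP r\<in>{0<..}. gfun L C4 Cp l3 p a r) = sgn (abar L C4 Cp l3 p - a)"
    using max(2) assms alpha_pos sgn_half_minus_powr[of "alpha L C4 Cp l3 p" "4/3" a]
    by (simp add: g abar_def)
  moreover have "\<exists>!r. r > 0 \<and> (\<forall>s>0. gfun L C4 Cp l3 p a s \<le> gfun L C4 Cp l3 p a r)"
    using max(1) by (simp add: g)
  ultimately show ?thesis
    unfolding L_def by (auto simp: sgn_if split: if_splits)
qed

end
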